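(* Let $T\ge 2$ and let $A$ be any finite-state protocol (as in the context) with $k$ states. Then there exist a connected graph with at most $k+1$ nodes and an initial assignment of states of $A$ to its nodes such that the execution of $A$ on this graph from this assignment is never synchronized.
   Context: Finite-state beeping protocols. A protocol $A$ consists of a finite set of states $Q$ (with $k=|Q|$), a subset $B\subseteq Q$ of beeping states, a clock map $\kappa:Q\to\{0,\dots,T-1\}$, a transition map $\sigma_B: B\to Q$ for beeping states, and a transition map $\sigma_L:(Q\setminus B)\times\{\text{beep},\text{silence}\}\to Q$ for listening states. Every node of a graph runs the same protocol. Execution on a finite connected undirected graph $G$ from an initial assignment of states: in each round, each node in a state of $B$ beeps and moves to $\sigma_B$ of its state; each other node listens and moves to $\sigma_L(q,\text{beep})$ if at least one neighbor beeps in that round and to $\sigma_L(q,\text{silence})$ otherwise. The clock value of a node in state $q$ is $\kappa(q)$. An execution is \emph{synchronized from round $t_0$} if for all rounds $t\ge t_0$: all nodes have the same clock value in round $t$, the clock values in round $t+1$ equal those in round $t$ plus $1$ modulo $T$, and a node beeps in round $t$ if and only if its clock value in round $t$ is $0$. The execution is \emph{eventually synchronized} if it is synchronized from some round $t_0$. *)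

theory Defs
  imports Main
begin

(* A finite-state beeping protocol: states = the finite type 'q (k = card UNIV),
   beeping states B, clock map kap (values < T), transition maps sigB (used on beeping states)
   and sigL (used on listening states; bool True = beep heard, False = silence). *)
definition connected_graph :: "nat set \<Rightarrow> (nat \<Rightarrow> nat \<Rightarrow> bool) \<Rightarrow> bool" where
  "connected_graph V E \<longleftrightarrow>
     finite V \<and> V \<noteq> {} \<and>
     (\<forall>u v. E u v \<longrightarrow> u \<in> V \<and> v \<in> V) \<and>
     (\<forall>u v. E u v \<longrightarrow> E v u) \<and> (\<forall>v. \<not> E v v) \<and>
     (\<forall>u\<in>V. \<forall>v\<in>V. (u, v) \<in> {(x, y). E x y}\<^sup>*)"

fun exec ::
  "nat set \<Rightarrow> (nat \<Rightarrow> nat \<Rightarrow> bool) \<Rightarrow> 'q set \<Rightarrow> ('q \<Rightarrow> 'q) \<Rightarrow> ('q \<Rightarrow> bool \<Rightarrow> 'q)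
   \<Rightarrow> (nat \<Rightarrow> 'q) \<Rightarrow> nat \<Rightarrow> nat \<Rightarrow> 'q" where
  "exec V E B sigB sigL init 0 = init"
| "exec V E B sigB sigL init (Suc t) =
     (\<lambda>v. let q = exec V E B sigB sigL init t v in
          if q \<in> B then sigB q
          else sigL q (\<exists>u\<in>V. E v u \<and> exec V E B sigB sigL init t u \<in> B))"

definition synchronized_from ::
  "nat \<Rightarrow> nat set \<Rightarrow> 'q set \<Rightarrow> ('q \<Rightarrow> nat) \<Rightarrow> (nat \<Rightarrow> nat \<Rightarrow> 'q) \<Rightarrow> nat \<Rightarrow> bool" where
  "synchronized_from T V B kap s t0 \<longleftrightarrow>
     (\<forall>t\<ge>t0.
        (\<forall>u\<in>V. \<forall>v\<in>V. kap (s t u) = kap (s t v)) \<and>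
        (\<forall>v\<in>V. kap (s (Suc t) v) = (kap (s t v) + 1) mod T) \<and>
        (\<forall>v\<in>V. s t v \<in> B \<longleftrightarrow> kap (s t v) = 0))"

definition eventually_synchronized ::
  "nat \<Rightarrow> nat set \<Rightarrow> 'q set \<Rightarrow> ('q \<Rightarrow> nat) \<Rightarrow> (nat \<Rightarrow> nat \<Rightarrow> 'q) \<Rightarrow> bool" where
  "eventually_synchronized T V B kap s \<longleftrightarrow> (\<exists>t0. synchronized_from T V B kap s t0)"

end

theory Submission
  imports Defs
begin

text \<open>
  Let \<open>f\<close> and \<open>g\<close> be the dynamics of a single node that hears silence, resp. a beep, in
  every round.  If some state never beeps under \<open>f\<close>, an isolated node started there never
  beeps.  Otherwise \<open>f\<close> has a cycle of length \<open>n \<le> k\<close> through a beeping state.  If moreover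
  some state \<open>d\<close> never beeps under \<open>g\<close>, take a star whose \<open>n\<close> leaves occupy all positions of
  that cycle and whose centre starts in \<open>d\<close>: the centre hears a beep in every round and stays
  silent, so the leaves keep running through the cycle undisturbed.  If instead every state
  eventually beeps under \<open>g\<close>, take a clique on a \<open>g\<close>-cycle through a beeping state: some node
  beeps in every round, so all nodes follow \<open>g\<close>.  In the last two cases there are beeps in
  every round, which is impossible for a synchronized execution with \<open>T \<ge> 2\<close>.
\<close>

lemma funpow_cycle_exists:
  fixes h :: "'a::finite \<Rightarrow> 'a"
  shows "\<exists>c n. 0 < n \<and> n \<le> card (UNIV :: 'a set) \<and> (h ^^ n) c = c"
proof -
  fix x :: 'a
  have "\<not> inj_on (\<lambda>i. (h ^^ i) x) {0..card (UNIV :: 'a set)}"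
  proof
    assume "inj_on (\<lambda>i. (h ^^ i) x) {0..card (UNIV :: 'a set)}"
    from card_inj_on_le[OF this, of UNIV] show False by simp
  qed
  then obtain a b where ab: "a < b" "b \<le> card (UNIV :: 'a set)" "(h ^^ a) x = (h ^^ b) x"
    unfolding inj_on_def by (metis atLeastAtMost_iff linorder_neqE_nat)
  have "(h ^^ (b - a)) ((h ^^ a) x) = (h ^^ b) x"
    using ab(1) by (simp flip: funpow_add[unfolded comp_def, THEN fun_cong])
  then show ?thesis
    using ab by (intro exI[of _ "(h ^^ a) x"] exI[of _ "b - a"]) auto
qed

lemma funpow_cycle_through:
  fixes h :: "'a::finite \<Rightarrow> 'a"
  assumes "\<forall>q. \<exists>i. (h ^^ i) q \<in> B"
  shows "\<exists>c n. c \<in> B \<and> 0 < n \<and> n \<le> card (UNIV :: 'a set) \<and> (h ^^ n) c = c"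
proof -
  obtain c n where c: "0 < n" "n \<le> card (UNIV :: 'a set)" "(h ^^ n) c = c"
    using funpow_cycle_exists by blast
  obtain i where "(h ^^ i) c \<in> B"
    using assms by blast
  moreover have "(h ^^ n) ((h ^^ i) c) = (h ^^ i) c"
    using c(3) by (metis funpow_add add.commute comp_apply)
  ultimately show ?thesis
    using c by blast
qed

lemma funpow_cycle_hits:
  assumes "(h ^^ n) c = c" "0 < n"
  shows "\<exists>i<n. (h ^^ (i + t)) c = c"
proof (intro exI conjI)
  let ?i = "(n - t mod n) mod n"
  show "?i < n"
    using assms(2) by simp
  have "(?i + t) mod n = (n - t mod n + t mod n) mod n"
    by (simp add: mod_add_left_eq mod_add_right_eq)
  also have "n - t mod n + t mod n = n"
    using assms(2) by (simp add: less_imp_le_nat)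
  finally have "(?i + t) mod n = 0"
    by simp
  then show "(h ^^ (?i + t)) c = c"
    using funpow_mod_eq[OF assms(1), of "?i + t"] by simp
qed

lemma synchronized_fromD:
  assumes "synchronized_from T V B kap s t0" "t0 \<le> t"
  shows "\<And>u v. u \<in> V \<Longrightarrow> v \<in> V \<Longrightarrow> kap (s t u) = kap (s t v)"
    and "\<And>v. v \<in> V \<Longrightarrow> kap (s (Suc t) v) = (kap (s t v) + 1) mod T"
    and "\<And>v. v \<in> V \<Longrightarrow> s t v \<in> B \<longleftrightarrow> kap (s t v) = 0"
  using assms unfolding synchronized_from_def by blast+

lemma synchronized_from_clock:
  assumes "synchronized_from T V B kap s t0" "v \<in> V" "\<forall>q. kap q < T"
  shows "kap (s (t0 + j) v) = (kap (s t0 v) + j) mod T"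
proof (induction j)
  case 0
  then show ?case
    using assms(3) by simp
next
  case (Suc j)
  then show ?case
    using synchronized_fromD(2)[OF assms(1) _ assms(2), of "t0 + j"] by (simp add: mod_Suc_eq)
qed

lemma synchronized_from_beeps:
  assumes "synchronized_from T V B kap s t0" "v \<in> V" "\<forall>q. kap q < T"
  shows "\<exists>t\<ge>t0. s t v \<in> B"
proof -
  let ?j = "T - kap (s t0 v)"
  have "kap (s (t0 + ?j) v) = (kap (s t0 v) + ?j) mod T"
    using synchronized_from_clock[OF assms] .
  also have "kap (s t0 v) + ?j = T"
    using assms(3) by (simp add: less_imp_le_nat)
  finally have "s (t0 + ?j) v \<in> B"
    using synchronized_fromD(3)[OF assms(1) _ assms(2)] by simp
  then show ?thesis
    using le_add1 by blast
qed

lemma not_eventually_synchronized_if_silent: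
  assumes "\<forall>t. \<forall>v\<in>V. s t v \<notin> B" "V \<noteq> {}" "\<forall>q. kap q < T"
  shows "\<not> eventually_synchronized T V B kap s"
  using assms synchronized_from_beeps unfolding eventually_synchronized_def by blast

text \<open>With \<open>T \<ge> 2\<close>, a synchronized execution never beeps in two consecutive rounds.\<close>

lemma not_eventually_synchronized_if_beeping_always:
  assumes beeps: "\<forall>t. \<exists>v\<in>V. s t v \<in> B" and "2 \<le> T"
  shows "\<not> eventually_synchronized T V B kap s"
proof
  assume "eventually_synchronized T V B kap s"
  then obtain t0 where S: "synchronized_from T V B kap s t0"
    unfolding eventually_synchronized_def by blast
  obtain u where u: "u \<in> V" "s t0 u \<in> B"
    using beeps by blast
  obtain v where v: "v \<in> V" "s (Suc t0) v \<in> B"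
    using beeps by blast
  have "kap (s t0 v) = 0"
    using synchronized_fromD[OF S order_refl] u v(1) by metis
  then have "kap (s (Suc t0) v) = 1"
    using synchronized_fromD(2)[OF S _ v(1)] \<open>2 \<le> T\<close> by simp
  moreover have "kap (s (Suc t0) v) = 0"
    using synchronized_fromD(3)[OF S _ v(1)] v(2) by simp
  ultimately show False
    by simp
qed

definition star_graph :: "nat \<Rightarrow> nat \<Rightarrow> nat \<Rightarrow> bool" where
  "star_graph n u v \<longleftrightarrow> (u = 0 \<and> v \<in> {1..n}) \<or> (v = 0 \<and> u \<in> {1..n})"

definition complete_graph :: "nat \<Rightarrow> nat \<Rightarrow> nat \<Rightarrow> bool" where
  "complete_graph n u v \<longleftrightarrow> u \<noteq> v \<and> u < n \<and> v < n"

lemma connected_graph_singleton: "connected_graph {0} (\<lambda>_ _. False)"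
  unfolding connected_graph_def by simp

lemma connected_graph_star: "connected_graph {0..n} (star_graph n)"
  unfolding connected_graph_def
proof (intro conjI ballI allI impI)
  have "(u, 0) \<in> {(x, y). star_graph n x y}\<^sup>* \<and> (0, u) \<in> {(x, y). star_graph n x y}\<^sup>*"
    if "u \<in> {0..n}" for u
    using that by (cases "u = 0") (auto simp: star_graph_def intro: r_into_rtrancl)
  then show "(u, v) \<in> {(x, y). star_graph n x y}\<^sup>*" if "u \<in> {0..n}" "v \<in> {0..n}" for u v
    using that by (meson rtrancl_trans)
qed (auto simp: star_graph_def)

lemma connected_graph_complete:
  assumes "0 < n"
  shows "connected_graph {..<n} (complete_graph n)"
  unfolding connected_graph_def
proof (intro conjI ballI allI impI)
  show "(u, v) \<in> {(x, y). complete_graph n x y}\<^sup>*" if "u \<in> {..<n}" "v \<in> {..<n}" for u v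
    using that by (cases "u = v") (auto simp: complete_graph_def intro: r_into_rtrancl)
qed (use assms in \<open>auto simp: complete_graph_def\<close>)

locale beeping_protocol =
  fixes B :: "'q set" and sigB :: "'q \<Rightarrow> 'q" and sigL :: "'q \<Rightarrow> bool \<Rightarrow> 'q"
begin

text \<open>\<open>step False\<close> and \<open>step True\<close> are the maps \<open>f\<close> and \<open>g\<close> of the proof idea.\<close>

definition step :: "bool \<Rightarrow> 'q \<Rightarrow> 'q" where
  "step heard q = (if q \<in> B then sigB q else sigL q heard)"

abbreviation run :: "nat set \<Rightarrow> (nat \<Rightarrow> nat \<Rightarrow> bool) \<Rightarrow> (nat \<Rightarrow> 'q) \<Rightarrow> nat \<Rightarrow> nat \<Rightarrow> 'q" where
  "run V E init \<equiv> exec V E B sigB sigL init"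

lemma run_Suc:
  "run V E init (Suc t) v = step (\<exists>u\<in>V. E v u \<and> run V E init t u \<in> B) (run V E init t v)"
  by (simp add: step_def Let_def)

lemma step_beeping: "q \<in> B \<Longrightarrow> step heard q = step True q"
  by (simp add: step_def)

lemma isolated_node_never_synchronized:
  assumes "\<forall>i. (step False ^^ i) q \<notin> B" "\<forall>q. kap q < T"
  shows "\<not> eventually_synchronized T {0} B kap (run {0} (\<lambda>_ _. False) (\<lambda>_. q))"
proof (rule not_eventually_synchronized_if_silent)
  have "run {0} (\<lambda>_ _. False) (\<lambda>_. q) t 0 = (step False ^^ t) q" for t
    by (induction t) (simp_all only: run_Suc, auto)
  then show "\<forall>t. \<forall>v\<in>{0}. run {0} (\<lambda>_ _. False) (\<lambda>_. q) t v \<notin> B"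
    using assms(1) by simp
qed (use assms(2) in auto)

lemma run_star:
  assumes d: "\<forall>i. (step True ^^ i) d \<notin> B"
    and c: "c \<in> B" "(step False ^^ n) c = c" "0 < n"
    and "v \<in> {0..n}"
  shows "run {0..n} (star_graph n) (\<lambda>v. if v = 0 then d else (step False ^^ (v - 1)) c) t v =
           (if v = 0 then (step True ^^ t) d else (step False ^^ (v - 1 + t)) c)"
  using \<open>v \<in> {0..n}\<close>
proof (induction t arbitrary: v)
  case 0
  then show ?case by simp
next
  case (Suc t)
  let ?run = "run {0..n} (star_graph n) (\<lambda>v. if v = 0 then d else (step False ^^ (v - 1)) c)"
  obtain i where i: "i < n" "(step False ^^ (i + t)) c = c"
    using funpow_cycle_hits[OF c(2,3)] by blast
  have leaf_beeps: "?run t (Suc i) \<in> B"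
    using Suc.IH[of "Suc i"] i c(1) by simp
  have centre_silent: "?run t 0 \<notin> B"
    using Suc.IH[of 0] d by simp
  have leaf_neighbour: "u = 0" if "star_graph n v u" "v \<noteq> 0" for u
    using that by (auto simp: star_graph_def)
  show ?case
  proof (cases "v = 0")
    case True
    have "star_graph n 0 (Suc i)"
      using i(1) by (simp add: star_graph_def)
    then have "\<exists>u\<in>{0..n}. star_graph n v u \<and> ?run t u \<in> B"
      using True leaf_beeps i(1) by (intro bexI[of _ "Suc i"]) auto
    then show ?thesis
      using True Suc.IH[of 0] by (simp only: run_Suc) simp
  next
    case False
    then have silence: "\<not> (\<exists>u\<in>{0..n}. star_graph n v u \<and> ?run t u \<in> B)"
      using centre_silent leaf_neighbour by blast
    have ih: "?run t v = (step False ^^ (v - 1 + t)) c"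
      using False Suc.IH[OF Suc.prems] by simp
    have "v - 1 + Suc t = Suc (v - 1 + t)"
      by simp
    then show ?thesis
      using False by (simp only: run_Suc silence ih if_False funpow.simps comp_apply)
  qed
qed

lemma star_never_synchronized:
  assumes "\<forall>i. (step True ^^ i) d \<notin> B"
    and "c \<in> B" "(step False ^^ n) c = c" "0 < n" "2 \<le> T"
  shows "\<not> eventually_synchronized T {0..n} B kap
           (run {0..n} (star_graph n) (\<lambda>v. if v = 0 then d else (step False ^^ (v - 1)) c))"
proof (rule not_eventually_synchronized_if_beeping_always[OF _ assms(5)], intro allI)
  fix t
  obtain i where "i < n" "(step False ^^ (i + t)) c = c"
    using funpow_cycle_hits[OF assms(3,4)] by blast
  then show "\<exists>v\<in>{0..n}. run {0..n} (star_graph n)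
               (\<lambda>v. if v = 0 then d else (step False ^^ (v - 1)) c) t v \<in> B"
    using run_star[OF assms(1-4), of "Suc i" t] assms(2) by (intro bexI[of _ "Suc i"]) auto
qed

lemma run_complete:
  assumes c: "c \<in> B" "(step True ^^ n) c = c" "0 < n" and "v < n"
  shows "run {..<n} (complete_graph n) (\<lambda>v. (step True ^^ v) c) t v = (step True ^^ (v + t)) c"
  using \<open>v < n\<close>
proof (induction t arbitrary: v)
  case 0
  then show ?case by simp
next
  case (Suc t)
  let ?run = "run {..<n} (complete_graph n) (\<lambda>v. (step True ^^ v) c)"
  obtain i where i: "i < n" "(step True ^^ (i + t)) c = c"
    using funpow_cycle_hits[OF c(2,3)] by blast
  have "step (\<exists>u\<in>{..<n}. complete_graph n v u \<and> ?run t u \<in> B) (?run t v) = step True (?run t v)"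
  proof (cases "?run t v \<in> B")
    case True
    then show ?thesis by (rule step_beeping)
  next
    case False
    then have "\<exists>u\<in>{..<n}. complete_graph n v u \<and> ?run t u \<in> B"
      using Suc.IH i c(1) Suc.prems unfolding complete_graph_def by (intro bexI[of _ i]) auto
    then show ?thesis
      by simp
  qed
  then show ?case
    using Suc.IH[OF Suc.prems] by (simp only: run_Suc) simp
qed

lemma complete_never_synchronized:
  assumes "c \<in> B" "(step True ^^ n) c = c" "0 < n" "2 \<le> T"
  shows "\<not> eventually_synchronized T {..<n} B kap
           (run {..<n} (complete_graph n) (\<lambda>v. (step True ^^ v) c))"
proof (rule not_eventually_synchronized_if_beeping_always[OF _ assms(4)], intro allI)
  fix t
  obtain i where "i < n" "(step True ^^ (i + t)) c = c"
    using funpow_cycle_hits[OF assms(2,3)] by blast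
  then show "\<exists>v\<in>{..<n}. run {..<n} (complete_graph n) (\<lambda>v. (step True ^^ v) c) t v \<in> B"
    using run_complete[OF assms(1-3), of i t] assms(1) by (intro bexI[of _ i]) auto
qed

end

theorem mainTheorem11:
  fixes T :: nat and B :: "'q::finite set" and kap :: "'q \<Rightarrow> nat"
    and sigB :: "'q \<Rightarrow> 'q" and sigL :: "'q \<Rightarrow> bool \<Rightarrow> 'q"
  assumes "T \<ge> 2"
    and "\<forall>q. kap q < T"
  shows "\<exists>V E init. connected_graph V E \<and> card V \<le> card (UNIV :: 'q set) + 1 \<and>
           \<not> eventually_synchronized T V B kap (exec V E B sigB sigL init)"
proof -
  interpret beeping_protocol B sigB sigL .
  show ?thesis
  proof (cases "\<exists>q. \<forall>i. (step False ^^ i) q \<notin> B")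
    case True
    then obtain q where "\<forall>i. (step False ^^ i) q \<notin> B" by blast
    from isolated_node_never_synchronized[OF this assms(2)] show ?thesis
      using connected_graph_singleton by fastforce
  next
    case False
    then obtain c n where c: "c \<in> B" "0 < n" "n \<le> card (UNIV :: 'q set)" "(step False ^^ n) c = c"
      using funpow_cycle_through[of "step False" B] by blast
    show ?thesis
    proof (cases "\<exists>d. \<forall>i. (step True ^^ i) d \<notin> B")
      case True
      then obtain d where "\<forall>i. (step True ^^ i) d \<notin> B" by blast
      from star_never_synchronized[OF this c(1,4,2) assms(1)] show ?thesis
        using connected_graph_star c(3) by fastforce
    next
      case False
      then obtain c' n' where c': "c' \<in> B" "0 < n'" "n' \<le> card (UNIV :: 'q set)" "(step True ^^ n') c' = c'"
        using funpow_cycle_through[of "step True" B] by blast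
      from complete_never_synchronized[OF c'(1,4,2) assms(1)] show ?thesis
        using connected_graph_complete[OF c'(2)] c'(3) by fastforce
    qed
  qed
qed

end
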